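(* Let $p\ge1$, $f:\mathbb{R}^n\to\mathbb{R}$ be $p$ times continuously differentiable, $x_k\in\mathbb{R}^n$, $\sigma_k>0$, $\theta_1\ge1$, and $m_k(s)=T_{f,p}(x_k,s)+\frac{\sigma_k}{(p+1)!}\|s\|^{p+1}$. Then there exists $s_k\in\mathbb{R}^n$ such that $$m_k(s_k)\le m_k(0)\qquad\text{and}\qquad \|\nabla_s T_{f,p}(x_k,s_k)\|_{r,1}\le\theta_1\frac{\sigma_k}{p!}\|s_k\|^p.$$
   Context: $\|\cdot\|$ is an arbitrary (possibly non-smooth) norm on $\mathbb{R}^n$, $\langle\cdot,\cdot\rangle$ the Euclidean inner product, and $\|v\|_{r,1}=\max_{\|s\|=1}|\langle v,s\rangle|$ the dual norm. $T_{f,p}(x,s)=f(x)+\sum_{\ell=1}^p\frac{1}{\ell!}\nabla^\ell f(x)[s]^\ell$ is the $p$-th order Taylor expansion of $f$ at $x$; $\nabla_sT_{f,p}(x,s)$ is its gradient in $s$. *)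

theory Defs
  imports "HOL-Analysis.Analysis"
begin

definition is_norm :: "('a::euclidean_space \<Rightarrow> real) \<Rightarrow> bool" where
  "is_norm N \<longleftrightarrow> (\<forall>x. N x \<ge> 0) \<and> (\<forall>x. N x = 0 \<longleftrightarrow> x = 0)
     \<and> (\<forall>c x. N (c *\<^sub>R x) = \<bar>c\<bar> * N x) \<and> (\<forall>x y. N (x + y) \<le> N x + N y)"

definition dual_norm :: "('a::euclidean_space \<Rightarrow> real) \<Rightarrow> 'a \<Rightarrow> real" where
  "dual_norm N v = (SUP s\<in>{s. N s = 1}. \<bar>v \<bullet> s\<bar>)"

definition partial :: "'a::euclidean_space \<Rightarrow> ('a \<Rightarrow> real) \<Rightarrow> 'a \<Rightarrow> real" where
  "partial b g x = deriv (\<lambda>t. g (x + t *\<^sub>R b)) 0"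

fun Ck :: "nat \<Rightarrow> ('a::euclidean_space \<Rightarrow> real) \<Rightarrow> bool" where
  "Ck 0 g = continuous_on UNIV g"
| "Ck (Suc k) g = (continuous_on UNIV g
      \<and> (\<forall>b\<in>Basis. \<forall>x. (\<lambda>t. g (x + t *\<^sub>R b)) differentiable (at 0))
      \<and> (\<forall>b\<in>Basis. Ck k (partial b g)))"

text \<open>The l-th derivative tensor applied to s l times:
  sum over i1..il of d_{i1}...d_{il} f(x) s_{i1} ... s_{il}.\<close>
definition dtensor :: "nat \<Rightarrow> ('a::euclidean_space \<Rightarrow> real) \<Rightarrow> 'a \<Rightarrow> 'a \<Rightarrow> real" where
  "dtensor l f x s = (\<Sum>bs\<in>{bs. set bs \<subseteq> Basis \<and> length bs = l}.
       foldr partial bs f x * (\<Prod>b\<leftarrow>bs. s \<bullet> b))"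

definition taylor :: "('a::euclidean_space \<Rightarrow> real) \<Rightarrow> nat \<Rightarrow> 'a \<Rightarrow> 'a \<Rightarrow> real" where
  "taylor f p x s = f x + (\<Sum>l=1..p. dtensor l f x s / fact l)"

end

theory Submission
  imports Defs
begin

(* The regularised model m s = T s + \<sigma>/(p+1)! * N s ^ (p+1) is continuous and coercive:
   T is a polynomial of degree p in s, while N is equivalent to the Euclidean norm, so the
   regulariser eventually dominates. Hence m has a global minimiser sk, and m sk \<le> m 0.
   Along a ray sk + t d the triangle inequality bounds m from above by a smooth function of t
   that agrees with m at t = 0; its derivative at 0 must therefore be nonnegative, which gives
   -(\<nabla>T(sk) \<bullet> d) \<le> \<sigma>/p! * N sk ^ p * N d for all d, i.e. the dual-norm bound with \<theta>1 = 1. *)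

lemma is_normD:
  assumes "is_norm N"
  shows "N x \<ge> 0" "N x = 0 \<longleftrightarrow> x = 0" "N (c *\<^sub>R x) = \<bar>c\<bar> * N x" "N (x + y) \<le> N x + N y"
  using assms unfolding is_norm_def by auto

lemma is_norm_zero: "is_norm N \<Longrightarrow> N 0 = 0"
  using is_normD(2) by blast

lemma is_norm_minus: "is_norm N \<Longrightarrow> N (- x) = N x"
  using is_normD(3)[of N "-1" x] by simp

lemma is_norm_sum:
  assumes "is_norm N"
  shows "N (sum g S) \<le> (\<Sum>i\<in>S. N (g i))"
proof (induction S rule: infinite_finite_induct)
  case (insert a S)
  then show ?case using is_normD(4)[OF assms, of "g a" "sum g S"] by simp
qed (simp_all add: is_norm_zero[OF assms])

lemma is_norm_le_norm:
  fixes N :: "'a::euclidean_space \<Rightarrow> real"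
  assumes "is_norm N"
  shows "N x \<le> (\<Sum>b\<in>Basis. N b) * norm x"
proof -
  have "N x = N (\<Sum>b\<in>Basis. (x \<bullet> b) *\<^sub>R b)" by (simp add: euclidean_representation)
  also have "\<dots> \<le> (\<Sum>b\<in>Basis. N ((x \<bullet> b) *\<^sub>R b))" by (rule is_norm_sum[OF assms])
  also have "\<dots> = (\<Sum>b\<in>Basis. \<bar>x \<bullet> b\<bar> * N b)" by (simp add: is_normD(3)[OF assms])
  also have "\<dots> \<le> (\<Sum>b\<in>Basis. norm x * N b)"
    by (intro sum_mono mult_right_mono Basis_le_norm is_normD(1)[OF assms]) auto
  finally show ?thesis by (simp add: sum_distrib_left mult.commute)
qed

lemma is_norm_continuous:
  fixes N :: "'a::euclidean_space \<Rightarrow> real"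
  assumes "is_norm N"
  shows "continuous_on UNIV N"
proof -
  define M where "M = (\<Sum>b\<in>Basis. N b)"
  have "dist (N x) (N y) \<le> M * dist x y" for x y
  proof -
    have "N x \<le> N y + N (x - y)" "N y \<le> N x + N (x - y)"
      using is_normD(4)[OF assms, of y "x - y"] is_normD(4)[OF assms, of x "y - x"]
        is_norm_minus[OF assms, of "x - y"] by simp_all
    moreover have "N (x - y) \<le> M * norm (x - y)"
      unfolding M_def by (rule is_norm_le_norm[OF assms])
    ultimately show ?thesis by (simp add: dist_real_def dist_norm abs_le_iff)
  qed
  moreover have "M \<ge> 0" unfolding M_def by (intro sum_nonneg is_normD(1)[OF assms])
  ultimately have "M-lipschitz_on UNIV N" by (auto intro: lipschitz_onI)
  then show ?thesis by (rule lipschitz_on_continuous_on)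
qed

lemma is_norm_ge_norm:
  fixes N :: "'a::euclidean_space \<Rightarrow> real"
  assumes "is_norm N"
  obtains c where "c > 0" "\<And>x. c * norm x \<le> N x"
proof -
  obtain b :: 'a where "b \<in> Basis" using nonempty_Basis by blast
  then have "sphere (0::'a) 1 \<noteq> {}" by (auto intro!: exI[of _ b])
  then obtain x0 where x0: "x0 \<in> sphere 0 1" and min: "\<forall>y\<in>sphere 0 1. N x0 \<le> N y"
    using continuous_attains_inf[OF compact_sphere]
      continuous_on_subset[OF is_norm_continuous[OF assms]] by (metis subset_UNIV)
  have "N x0 > 0" using x0 is_normD(1,2)[OF assms, of x0] by force
  moreover have "N x0 * norm x \<le> N x" for x
  proof (cases "x = 0")
    case False
    then have "N x0 \<le> N ((1 / norm x) *\<^sub>R x)" using min by simp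
    then show ?thesis using False by (simp add: is_normD(3)[OF assms] field_simps)
  qed (simp add: is_norm_zero[OF assms])
  ultimately show ?thesis using that by blast
qed

lemma dual_norm_le:
  assumes "is_norm N" and "\<And>d. - (g \<bullet> d) \<le> K * N d"
  shows "dual_norm N g \<le> K"
  unfolding dual_norm_def
proof (rule cSUP_least)
  obtain b :: 'a where "b \<in> Basis" using nonempty_Basis by blast
  then have "N b > 0" using is_normD(1,2)[OF assms(1), of b] by force
  then have "N ((1 / N b) *\<^sub>R b) = 1" by (simp add: is_normD(3)[OF assms(1)])
  then show "{s. N s = 1} \<noteq> {}" by blast
next
  fix d assume "d \<in> {s. N s = 1}"
  then show "\<bar>g \<bullet> d\<bar> \<le> K"
    using assms(2)[of d] assms(2)[of "- d"] is_norm_minus[OF assms(1), of d]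
    by (simp add: abs_le_iff)
qed

lemma differentiable_imp_gderiv:
  fixes T :: "'a::euclidean_space \<Rightarrow> real"
  assumes "T differentiable (at x)"
  obtains g where "GDERIV T x :> g"
proof -
  obtain T' where T': "(T has_derivative T') (at x)"
    using assms by (auto simp: differentiable_def)
  then have "linear T'" by (rule has_derivative_linear)
  then have "T' h = h \<bullet> adjoint T' 1" for h
    by (simp add: adjoint_works)
  with T' that show ?thesis
    unfolding gderiv_def by (metis (no_types, lifting) ext)
qed

lemma prod_list_inner_differentiable:
  "(\<lambda>s::'a::euclidean_space. \<Prod>b\<leftarrow>bs. s \<bullet> b) differentiable (at x)"
  by (induction bs) (auto intro!: derivative_intros)

lemma taylor_differentiable: "taylor f p x differentiable (at s)"
  unfolding taylor_def dtensor_def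
  by (auto intro!: derivative_intros prod_list_inner_differentiable finite_lists_length_eq
      simp: divide_inverse)

lemma taylor_continuous: "continuous_on UNIV (taylor f p x)"
  by (intro continuous_at_imp_continuous_on ballI differentiable_imp_continuous_within
      taylor_differentiable)

lemma abs_prod_list_inner_le:
  fixes s :: "'a::euclidean_space"
  shows "set bs \<subseteq> Basis \<Longrightarrow> \<bar>\<Prod>b\<leftarrow>bs. s \<bullet> b\<bar> \<le> norm s ^ length bs"
  by (induction bs) (auto simp: abs_mult intro!: mult_mono Basis_le_norm)

lemma abs_dtensor_le:
  fixes x :: "'a::euclidean_space"
  shows "\<exists>C. \<forall>s. \<bar>dtensor l f x s\<bar> \<le> C * norm s ^ l"
proof -
  let ?B = "{bs. set bs \<subseteq> (Basis::'a set) \<and> length bs = l}"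
  have "\<bar>dtensor l f x s\<bar> \<le> (\<Sum>bs\<in>?B. \<bar>foldr partial bs f x\<bar>) * norm s ^ l" for s
  proof -
    have "\<bar>dtensor l f x s\<bar> \<le> (\<Sum>bs\<in>?B. \<bar>foldr partial bs f x\<bar> * \<bar>\<Prod>b\<leftarrow>bs. s \<bullet> b\<bar>)"
      unfolding dtensor_def abs_mult[symmetric] by (rule sum_abs)
    also have "\<dots> \<le> (\<Sum>bs\<in>?B. \<bar>foldr partial bs f x\<bar> * norm s ^ l)"
      by (intro sum_mono mult_left_mono) (auto dest: abs_prod_list_inner_le[of _ s])
    finally show ?thesis by (simp add: sum_distrib_right)
  qed
  then show ?thesis by blast
qed

lemma dtensor_at_zero: "l \<ge> 1 \<Longrightarrow> dtensor l f x (0::'a::euclidean_space) = 0"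
  unfolding dtensor_def by (intro sum.neutral ballI) (auto simp: length_Suc_conv dest!: le_Suc_ex)

lemma taylor_growth:
  fixes x :: "'a::euclidean_space"
  obtains C where "\<And>s. norm s \<ge> 1 \<Longrightarrow> \<bar>taylor f p x s - taylor f p x 0\<bar> \<le> C * norm s ^ p"
proof -
  obtain C where C: "\<And>l s. \<bar>dtensor l f x s\<bar> \<le> C l * norm s ^ l"
    using abs_dtensor_le[of _ f x] by metis
  have "\<bar>taylor f p x s - taylor f p x 0\<bar> \<le> (\<Sum>l=1..p. \<bar>C l\<bar> / fact l) * norm s ^ p"
    if "norm s \<ge> 1" for s
  proof -
    have "\<bar>taylor f p x s - taylor f p x 0\<bar> \<le> (\<Sum>l=1..p. \<bar>dtensor l f x s\<bar> / fact l)"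
      using sum_abs[of "\<lambda>l. dtensor l f x s / fact l"] by (simp add: taylor_def dtensor_at_zero)
    also have "\<dots> \<le> (\<Sum>l=1..p. \<bar>C l\<bar> / fact l * norm s ^ p)"
    proof (intro sum_mono)
      fix l assume "l \<in> {1..p}"
      then have "norm s ^ l \<le> norm s ^ p" using that by (intro power_increasing) auto
      then have "\<bar>dtensor l f x s\<bar> \<le> \<bar>C l\<bar> * norm s ^ p"
        using C[of l s] by (smt (verit) abs_ge_self mult_mono norm_ge_zero zero_le_power)
      then show "\<bar>dtensor l f x s\<bar> / fact l \<le> \<bar>C l\<bar> / fact l * norm s ^ p"
        by (simp add: divide_right_mono)
    qed
    finally show ?thesis by (simp add: sum_distrib_right)
  qed
  then show ?thesis using that by blast
qed

lemma continuous_coercive_attains_min: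
  fixes m :: "'a::{real_normed_vector,heine_borel} \<Rightarrow> real"
  assumes "continuous_on UNIV m" and "\<And>s. norm s > R \<Longrightarrow> m s > m 0"
  obtains x where "\<And>y. m x \<le> m y"
proof -
  have "0 \<in> cball (0::'a) R" using assms(2)[of 0] by force
  then obtain x where x: "x \<in> cball 0 R" and min: "\<forall>y\<in>cball 0 R. m x \<le> m y"
    using continuous_attains_inf[OF compact_cball _ continuous_on_subset[OF assms(1)]]
    by (metis empty_iff subset_UNIV)
  have "m x \<le> m 0" using min \<open>0 \<in> cball 0 R\<close> by blast
  have "m x \<le> m y" for y
  proof (cases "norm y \<le> R")
    case False
    then show ?thesis using \<open>m x \<le> m 0\<close> assms(2)[of y] by simp
  qed (use min in simp)
  then show ?thesis using that by blast
qed

lemma power_norm_regularisation_coercive: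
  fixes N T :: "'a::euclidean_space \<Rightarrow> real"
  assumes "is_norm N" and "a > 0"
    and growth: "\<And>s. norm s \<ge> 1 \<Longrightarrow> \<bar>T s - T 0\<bar> \<le> C * norm s ^ p"
  obtains R where "\<And>s. norm s > R \<Longrightarrow> T s + a * N s ^ (p + 1) > T 0 + a * N 0 ^ (p + 1)"
proof -
  obtain c where c: "c > 0" "\<And>x. c * norm x \<le> N x" using is_norm_ge_norm[OF assms(1)] by blast
  define K where "K = a * c ^ (p + 1)"
  have "K > 0" unfolding K_def using assms(2) c(1) by simp
  have "T s + a * N s ^ (p + 1) > T 0 + a * N 0 ^ (p + 1)" if "norm s > max 1 (C / K)" for s
  proof -
    define r where "r = norm s"
    have r: "r \<ge> 1" "K * r > C"
      using that \<open>K > 0\<close> unfolding r_def by (auto simp: pos_divide_less_eq mult.commute)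
    have "K * r ^ (p + 1) = a * (c * r) ^ (p + 1)" unfolding K_def by (simp add: power_mult_distrib)
    also have "\<dots> \<le> a * N s ^ (p + 1)"
      using c r(1) assms(2) unfolding r_def by (intro mult_left_mono power_mono) auto
    finally have "T s + a * N s ^ (p + 1) - T 0 \<ge> r ^ p * (K * r - C)"
      using growth[of s] r(1) unfolding r_def by (simp add: algebra_simps abs_le_iff)
    moreover have "r ^ p * (K * r - C) > 0" using r by simp
    ultimately show ?thesis by (simp add: is_norm_zero[OF assms(1)])
  qed
  then show ?thesis using that by blast
qed

lemma gradient_at_power_norm_regularised_min:
  fixes N T :: "'a::euclidean_space \<Rightarrow> real"
  assumes "is_norm N" and "a \<ge> 0" and grad: "GDERIV T x :> g"
    and min: "\<And>y. T x + a * N x ^ q \<le> T y + a * N y ^ q"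
  shows "- (g \<bullet> d) \<le> a * q * N x ^ (q - 1) * N d"
proof (rule ccontr)
  assume "\<not> ?thesis"
  then have slope: "g \<bullet> d + a * q * N x ^ (q - 1) * N d < 0" by simp
  define \<phi> where "\<phi> t = T (x + t *\<^sub>R d) + a * (N x + t * N d) ^ q" for t
  from grad have "(T has_derivative (\<lambda>h. h \<bullet> g)) (at (x + 0 *\<^sub>R d))"
    by (simp add: gderiv_def)
  then have "((\<lambda>t. T (x + t *\<^sub>R d)) has_derivative (\<lambda>t. (t *\<^sub>R d) \<bullet> g)) (at 0)"
    by (rule has_derivative_compose[rotated]) (auto intro!: derivative_eq_intros)
  moreover have "(\<lambda>t. (t *\<^sub>R d) \<bullet> g) = (*) (g \<bullet> d)" by (auto simp: inner_commute)
  ultimately have "((\<lambda>t. T (x + t *\<^sub>R d)) has_field_derivative g \<bullet> d) (at 0)"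
    by (simp add: has_field_derivative_def)
  moreover have "((\<lambda>t. a * (N x + t * N d) ^ q) has_field_derivative
                  a * q * N x ^ (q - 1) * N d) (at 0)"
    by (auto intro!: derivative_eq_intros)
  ultimately have "(\<phi> has_field_derivative g \<bullet> d + a * q * N x ^ (q - 1) * N d) (at 0)"
    unfolding \<phi>_def by (rule DERIV_add)
  then obtain \<delta> where "\<delta> > 0" and dec: "\<And>h. 0 < h \<Longrightarrow> h < \<delta> \<Longrightarrow> \<phi> h < \<phi> 0"
    using DERIV_neg_dec_right[OF _ slope] by force
  define h where "h = \<delta> / 2"
  have "h > 0" "h < \<delta>" using \<open>\<delta> > 0\<close> unfolding h_def by auto
  have "N (x + h *\<^sub>R d) \<le> N x + h * N d"
    using is_normD(3,4)[OF assms(1)] \<open>h > 0\<close> by (metis abs_of_pos)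
  then have "T (x + h *\<^sub>R d) + a * N (x + h *\<^sub>R d) ^ q \<le> \<phi> h"
    unfolding \<phi>_def using assms(2) is_normD(1)[OF assms(1)]
    by (simp add: mult_left_mono power_mono)
  also have "\<dots> < \<phi> 0" using dec \<open>h > 0\<close> \<open>h < \<delta>\<close> .
  also have "\<dots> = T x + a * N x ^ q" unfolding \<phi>_def by simp
  finally show False using min[of "x + h *\<^sub>R d"] by simp
qed

theorem corollary2p3:
  fixes N :: "'a::euclidean_space \<Rightarrow> real"
    and f :: "'a \<Rightarrow> real" and p :: nat and xk :: 'a and \<sigma> \<theta>1 :: real
  assumes "is_norm N" and "p \<ge> 1" and "Ck p f" and "\<sigma> > 0" and "\<theta>1 \<ge> 1"
  shows "\<exists>sk g. taylor f p xk sk + \<sigma> / fact (p + 1) * N sk ^ (p + 1)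
                 \<le> taylor f p xk 0 + \<sigma> / fact (p + 1) * N 0 ^ (p + 1)
            \<and> GDERIV (\<lambda>s. taylor f p xk s) sk :> g
            \<and> dual_norm N g \<le> \<theta>1 * (\<sigma> / fact p) * N sk ^ p"
proof -
  define T where "T = taylor f p xk"
  define a where "a = \<sigma> / fact (p + 1)"
  have "a > 0" unfolding a_def using \<open>\<sigma> > 0\<close> by simp
  obtain C where "\<And>s. norm s \<ge> 1 \<Longrightarrow> \<bar>T s - T 0\<bar> \<le> C * norm s ^ p"
    unfolding T_def using taylor_growth by blast
  then obtain R where "\<And>s. norm s > R \<Longrightarrow> T s + a * N s ^ (p + 1) > T 0 + a * N 0 ^ (p + 1)"
    using power_norm_regularisation_coercive[OF \<open>is_norm N\<close> \<open>a > 0\<close>] by blast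
  moreover have "continuous_on UNIV (\<lambda>s. T s + a * N s ^ (p + 1))"
    unfolding T_def by (intro continuous_intros taylor_continuous is_norm_continuous[OF assms(1)])
  ultimately obtain sk where min: "\<And>y. T sk + a * N sk ^ (p + 1) \<le> T y + a * N y ^ (p + 1)"
    using continuous_coercive_attains_min by blast
  obtain g where g: "GDERIV T sk :> g"
    unfolding T_def using differentiable_imp_gderiv[OF taylor_differentiable] by blast
  have "fact (p + 1) = (fact p :: real) * real (p + 1)" by (simp del: of_nat_Suc)
  then have "a * real (p + 1) = \<sigma> / fact p" unfolding a_def by (simp del: of_nat_Suc)
  then have "- (g \<bullet> d) \<le> (\<sigma> / fact p * N sk ^ p) * N d" for d
    using gradient_at_power_norm_regularised_min[OF assms(1) _ g min, of d] \<open>a > 0\<close> by simp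
  then have "dual_norm N g \<le> \<sigma> / fact p * N sk ^ p" by (rule dual_norm_le[OF assms(1)])
  also have "\<dots> \<le> \<theta>1 * (\<sigma> / fact p) * N sk ^ p"
    using mult_right_mono[OF \<open>\<theta>1 \<ge> 1\<close>, of "\<sigma> / fact p * N sk ^ p"] \<open>\<sigma> > 0\<close>
      is_normD(1)[OF assms(1), of sk] by (simp add: mult.assoc)
  finally show ?thesis using min[of 0] g unfolding T_def a_def by blast
qed

end
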